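(* Let $D$ be a $G$-invariant domain in $\Xi^+$. Then $W^0\cdot(\mathcal D^{\llcorner})^+=\mathcal D^{\llcorner}_\circ$.
   Context: $G$ is a connected, non-compact, real simple Lie group contained in its universal complexification $G^{\mathbb C}$; $K$ maximal compact, $G/K$ an irreducible Hermitian symmetric space of non-compact type, $\theta$ the Cartan involution, $\mathfrak g=\mathfrak k\oplus\mathfrak p$, $\mathfrak a\subset\mathfrak p$ maximal abelian, $r=\dim\mathfrak a$, $\mathfrak g^\alpha$ restricted root spaces, $e_1,\dots,e_r$ a basis of $\mathfrak a^*$ with restricted roots of type $C_r$ ($\pm2e_j,\pm e_j\pm e_k$) or $BC_r$ (additionally $\pm e_j$). $Z_0$ is the central element of $\mathfrak k$ defining the complex structure; $E_j\in\mathfrak g^{2e_j}$ with $A_j=[\theta E_j,E_j]$, $[A_j,E_j]=2E_j$, $[Z_0,E_j-\theta E_j]=A_j$, $[Z_0,A_j]=-(E_j-\theta E_j)$. $\Lambda_r=\mathrm{span}_{\mathbb R}\{E_j\}$, $\Lambda_r^{\llcorner}=\{\sum x_jE_j:x_j\ge0\}$. $W_K(\Lambda_r)=N_K(\Lambda_r)/Z_K(\Lambda_r)$ acts on $\Lambda_r$ by permutations of the $E_j$ and is generated by the reflections $\gamma_{k\,k+1}$ ($1\le k\le r-1$) swapping the $k$-th and $(k+1)$-th coordinates. $x_0=eK^{\mathbb C}\in G^{\mathbb C}/K^{\mathbb C}$, $\Xi^+=G\exp(i\{\sum x_jE_j:x_j>-1\})\cdot x_0$. For $D$: $\mathcal D^{\llcorner}=\{X\in\Lambda_r^{\llcorner}:\exp(iX)\cdot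 x_0\in D\}$ (a $W_K(\Lambda_r)$-invariant open subset of $\Lambda_r^{\llcorner}$); $(\mathcal D^{\llcorner})^+=\mathcal D^{\llcorner}\cap\{\sum x_jE_j:x_1\ge x_2\ge\dots\ge x_r\ge0\}$ (which is connected); $\mathcal D^{\llcorner}_\circ$ is the connected component of $\mathcal D^{\llcorner}$ containing $(\mathcal D^{\llcorner})^+$. $\Gamma^0$ is the set of those $\gamma_{k\,k+1}$ whose fixed-point hyperplane contains a non-zero element of $(\mathcal D^{\llcorner})^+$, and $W^0$ is the subgroup of $W_K(\Lambda_r)$ generated by $\Gamma^0$. *)

theory Defs
  imports "HOL-Analysis.Analysis" "HOL-Combinatorics.Permutations"
begin

text \<open>Coordinates: X = sum_j x_j E_j in Lambda_r is represented by the function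
  x :: nat => real with x j the coefficient of E_(j+1) (0-indexed, j < r),
  and x j = 0 for j >= r.  The topology on nat => real is the product topology,
  which on these extensional functions is the Euclidean topology of R^r.\<close>

definition Lambda_r :: "nat \<Rightarrow> (nat \<Rightarrow> real) set" where
  "Lambda_r r = {x. \<forall>j\<ge>r. x j = 0}"

definition Lambda_corner :: "nat \<Rightarrow> (nat \<Rightarrow> real) set" where
  "Lambda_corner r = {x. (\<forall>j<r. 0 \<le> x j) \<and> (\<forall>j\<ge>r. x j = 0)}"

text \<open>Action of W_K(Lambda_r) = permutations of the E_j.\<close>
definition Wact :: "(nat \<Rightarrow> nat) \<Rightarrow> (nat \<Rightarrow> real) \<Rightarrow> (nat \<Rightarrow> real)" where
  "Wact \<sigma> x = x \<circ> inv \<sigma>"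

definition WK :: "nat \<Rightarrow> (nat \<Rightarrow> nat) set" where
  "WK r = {\<sigma>. \<sigma> permutes {..<r}}"

text \<open>gamma_(k,k+1) (1-indexed in the paper) is the swap of 0-indexed coordinates k-1, k.
  Here gamma k swaps 0-indexed coordinates k and k+1, for k+1 < r.\<close>
definition gamma :: "nat \<Rightarrow> nat \<Rightarrow> nat" where
  "gamma k = Transposition.transpose k (Suc k)"

definition plus_part :: "nat \<Rightarrow> (nat \<Rightarrow> real) set \<Rightarrow> (nat \<Rightarrow> real) set" where
  "plus_part r U = U \<inter> {x. (\<forall>j. Suc j < r \<longrightarrow> x (Suc j) \<le> x j) \<and> (\<forall>j<r. 0 \<le> x j)}"

definition Gamma0 :: "nat \<Rightarrow> (nat \<Rightarrow> real) set \<Rightarrow> nat set" where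
  "Gamma0 r U = {k. Suc k < r \<and> (\<exists>x\<in>plus_part r U. (\<exists>j<r. x j \<noteq> 0) \<and> Wact (gamma k) x = x)}"

text \<open>W^0: subgroup of W_K(Lambda_r) generated by Gamma^0 (finite group, so
  closure under composition with generators starting from id suffices).\<close>
inductive_set W0 :: "nat \<Rightarrow> (nat \<Rightarrow> real) set \<Rightarrow> (nat \<Rightarrow> nat) set"
  for r :: nat and U :: "(nat \<Rightarrow> real) set" where
  W0_id: "id \<in> W0 r U"
| W0_step: "\<sigma> \<in> W0 r U \<Longrightarrow> k \<in> Gamma0 r U \<Longrightarrow> \<sigma> \<circ> gamma k \<in> W0 r U"

end

theory Submission
  imports Defs
begin

text \<open>Sorting coordinates writes every point y of the corner as y = w \<cdot> p with p in the chamber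
  x_1 \<ge> \<dots> \<ge> x_r \<ge> 0. The sorted point p is unique, so w is unique up to the stabiliser of p,
  which is generated by the adjacent swaps \<gamma>_k with p_k = p_(k+1). For p in the plus part
  of U every such swap lies in \<Gamma>^0: p itself is the required fixed point unless p = 0, and then
  openness of U supplies a small point (t, \<dots>, t) of the plus part. Hence the points of U whose
  chamber representatives come from W^0 and those whose representatives do not form two relatively
  closed, disjoint pieces of U, and the component of x_0 lies in the first, which is W^0 applied to
  the plus part. Conversely, each generator \<gamma> of W^0 fixes a point of the connected plus part, so
  \<sigma>\<gamma> and \<sigma> move it onto overlapping connected sets, and by induction every W^0-translate of the
  plus part lies in the component.\<close>

definition chamber :: "nat \<Rightarrow> (nat \<Rightarrow> real) set" where
  "chamber r = {x. (\<forall>j. Suc j < r \<longrightarrow> x (Suc j) \<le> x j) \<and> (\<forall>j<r. 0 \<le> x j)}"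

lemma plus_part_eq: "plus_part r U = U \<inter> chamber r"
  by (simp add: plus_part_def chamber_def)

lemma chamber_iff_sorted:
  "x \<in> chamber r \<longleftrightarrow> sorted (rev (map x [0..<r])) \<and> (\<forall>j<r. 0 \<le> x j)"
  by (auto simp: chamber_def sorted_wrt_rev sorted_wrt_iff_nth_Suc_transp transp_def)

lemma chamber_antimono:
  assumes "x \<in> chamber r" "i \<le> j" "j < r"
  shows "x j \<le> x i"
  using assms sorted_wrt_nth_less[of "\<lambda>a b. b \<le> a" "map x [0..<r]" i j]
  by (cases "i = j") (auto simp: chamber_iff_sorted sorted_wrt_rev)

lemma map_comp_permutes:
  assumes "w permutes {..<r}"
  shows "map (y \<circ> w) [0..<r] = permute_list w (map y [0..<r])"
  using permutes_in_image[OF assms] by (simp add: permute_list_def)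

lemma chamber_representative_unique:
  assumes w1: "w1 permutes {..<r}" and w2: "w2 permutes {..<r}"
    and "y \<circ> w1 \<in> chamber r" "y \<circ> w2 \<in> chamber r"
  shows "y \<circ> w1 = y \<circ> w2"
proof -
  have "sort (map y [0..<r]) = rev (map (y \<circ> w) [0..<r])"
    if "w permutes {..<r}" "y \<circ> w \<in> chamber r" for w
    using that by (intro properties_for_sort) (simp_all add: map_comp_permutes chamber_iff_sorted)
  then have "map (y \<circ> w1) [0..<r] = map (y \<circ> w2) [0..<r]"
    using assms by (metis rev_rev_ident)
  then have "(y \<circ> w1) i = (y \<circ> w2) i" if "i < r" for i
    using that by (simp add: map_eq_conv)
  moreover have "(y \<circ> w1) i = (y \<circ> w2) i" if "\<not> i < r" for i
    using permutes_not_in[OF w1] permutes_not_in[OF w2] that by simp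
  ultimately show ?thesis by (metis ext)
qed

lemma chamber_representative_exists:
  assumes "y \<in> Lambda_corner r"
  obtains w where "w permutes {..<r}" "y \<circ> w \<in> chamber r"
proof -
  obtain w where w: "w permutes {..<r}"
    "permute_list w (map y [0..<r]) = rev (sort (map y [0..<r]))"
    by (rule mset_eq_permutation[of "rev (sort (map y [0..<r]))" "map y [0..<r]"]) auto
  have "y \<circ> w \<in> chamber r"
    using w assms permutes_in_image[OF w(1)]
    by (auto simp: chamber_iff_sorted map_comp_permutes Lambda_corner_def)
  with w(1) show thesis by (rule that)
qed

lemma closed_chamber_preimage: "closed {y :: nat \<Rightarrow> real. y \<circ> w \<in> chamber r}"
proof -
  have "{y :: nat \<Rightarrow> real. y \<circ> w \<in> chamber r} =
    {y. \<forall>j. (Suc j < r \<longrightarrow> y (w (Suc j)) \<le> y (w j)) \<and> (j < r \<longrightarrow> 0 \<le> y (w j))}"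
    by (auto simp: chamber_def)
  also have "closed \<dots>"
    by (intro closed_Collect_all closed_Collect_conj closed_Collect_imp closed_Collect_le
        continuous_on_product_coordinates continuous_on_const) auto
  finally show ?thesis .
qed

lemma Wact_comp: "bij \<sigma> \<Longrightarrow> bij \<tau> \<Longrightarrow> Wact (\<sigma> \<circ> \<tau>) x = Wact \<sigma> (Wact \<tau> x)"
  by (simp add: Wact_def o_inv_distrib comp_assoc)

lemma Wact_inv: "w permutes S \<Longrightarrow> Wact (inv w) y = y \<circ> w"
  by (metis Wact_def permutes_bij inv_inv_eq)

lemma Wact_comp_cancel: "w permutes S \<Longrightarrow> Wact w (y \<circ> w) = y"
  by (simp add: Wact_def fun_eq_iff permutes_inverses(1))

lemma Wact_gamma_fixed_iff: "Wact (gamma k) x = x \<longleftrightarrow> x k = x (Suc k)"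
  by (auto simp: Wact_def gamma_def fun_eq_iff Transposition.transpose_def)

lemma continuous_on_Wact: "continuous_on S (Wact \<sigma>)"
  unfolding Wact_def o_def
  by (intro continuous_on_coordinatewise_then_product
      continuous_on_subset[OF continuous_on_product_coordinates]) auto

lemma W0_comp: "\<tau> \<in> W0 r U \<Longrightarrow> \<sigma> \<in> W0 r U \<Longrightarrow> \<sigma> \<circ> \<tau> \<in> W0 r U"
proof (induction \<tau> rule: W0.induct)
  case W0_id
  then show ?case by simp
next
  case (W0_step \<tau> k)
  have "(\<sigma> \<circ> \<tau>) \<circ> gamma k \<in> W0 r U"
    by (rule W0.W0_step[OF W0_step.IH[OF W0_step.prems] W0_step.hyps(2)])
  then show ?case by (metis comp_assoc)
qed

lemma gamma_in_W0: "k \<in> Gamma0 r U \<Longrightarrow> gamma k \<in> W0 r U"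
  using W0.W0_step[OF W0.W0_id, of k r U] by simp

lemma gamma_permutes: "Suc k < r \<Longrightarrow> gamma k permutes {..<r}"
  unfolding gamma_def by (intro permutes_swap_id) auto

lemma W0_permutes: "\<sigma> \<in> W0 r U \<Longrightarrow> \<sigma> permutes {..<r}"
proof (induction \<sigma> rule: W0.induct)
  case W0_id
  show ?case by (fact permutes_id)
next
  case (W0_step \<sigma> k)
  then show ?case
    using gamma_permutes permutes_compose unfolding Gamma0_def by blast
qed

lemma transpose_in_W0:
  assumes "\<And>k. a \<le> k \<Longrightarrow> k < b \<Longrightarrow> k \<in> Gamma0 r U" "a < b"
  shows "Transposition.transpose a b \<in> W0 r U"
  using assms
proof (induction "b - a" arbitrary: a)
  case 0
  then show ?case by simp
next
  case (Suc d)
  show ?case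
  proof (cases "Suc a = b")
    case True
    then show ?thesis using gamma_in_W0[of a r U] Suc.prems by (simp add: gamma_def)
  next
    case False
    then have "Transposition.transpose (Suc a) b \<in> W0 r U" "gamma a \<in> W0 r U"
      using Suc by (auto intro: gamma_in_W0)
    moreover have "Transposition.transpose a b = gamma a \<circ> Transposition.transpose (Suc a) b \<circ> gamma a"
      using False Suc.prems by (auto simp: gamma_def Transposition.transpose_def fun_eq_iff)
    ultimately show ?thesis by (metis W0_comp)
  qed
qed

lemma transpose_tie_in_W0:
  assumes p: "p \<in> chamber r"
    and ties: "\<And>k. Suc k < r \<Longrightarrow> p k = p (Suc k) \<Longrightarrow> k \<in> Gamma0 r U"
    and ab: "a < b" "b < r" "p a = p b"
  shows "Transposition.transpose a b \<in> W0 r U"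
proof (rule transpose_in_W0[OF _ ab(1)])
  fix k assume k: "a \<le> k" "k < b"
  have "p b \<le> p (Suc k)" "p (Suc k) \<le> p k" "p k \<le> p a"
    using chamber_antimono[OF p, of "Suc k" b] chamber_antimono[OF p, of k "Suc k"]
      chamber_antimono[OF p, of a k] k ab by simp_all
  then show "k \<in> Gamma0 r U" using ties k ab by simp
qed

lemma stabilizer_in_W0:
  assumes p: "p \<in> chamber r"
    and ties: "\<And>k. Suc k < r \<Longrightarrow> p k = p (Suc k) \<Longrightarrow> k \<in> Gamma0 r U"
    and \<tau>: "\<tau> permutes {..<r}" and fixed: "p \<circ> \<tau> = p"
  shows "\<tau> \<in> W0 r U"
proof -
  \<comment> \<open>Induction on the support: \<tau> = (x \<tau>x) \<circ> \<rho> with \<rho> fixing x, and p x = p (\<tau> x).\<close>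
  have "\<tau> \<in> W0 r U" if "finite S" "S \<subseteq> {..<r}" "\<tau> permutes S" "p \<circ> \<tau> = p" for S \<tau>
    using that
  proof (induction S arbitrary: \<tau> rule: finite_induct)
    case empty
    then show ?case by (metis W0.W0_id permutes_empty)
  next
    case (insert x S)
    let ?t = "Transposition.transpose x (\<tau> x)"
    have tie: "p (\<tau> x) = p x" using insert.prems(3) by (metis comp_apply)
    have "\<tau> x \<in> insert x S" using permutes_in_image[OF insert.prems(2)] by simp
    then have "x < r" "\<tau> x < r" using insert.prems(1) by auto
    then have "?t \<in> W0 r U"
    proof (cases x "\<tau> x" rule: linorder_cases)
      case less
      then show ?thesis using transpose_tie_in_W0[OF p ties] \<open>\<tau> x < r\<close> tie by simp
    next
      case equal
      then show ?thesis by (simp add: W0.W0_id)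
    next
      case greater
      have "Transposition.transpose (\<tau> x) x \<in> W0 r U"
        using transpose_tie_in_W0[OF p ties greater \<open>x < r\<close>] tie by simp
      then show ?thesis by (simp only: transpose_commute)
    qed
    moreover have "p \<circ> ?t = p"
      using tie by (auto simp: fun_eq_iff Transposition.transpose_def)
    then have fixed': "p \<circ> (?t \<circ> \<tau>) = p"
      using insert.prems(3) by (simp only: o_assoc)
    then have "?t \<circ> \<tau> \<in> W0 r U"
      using insert.IH[OF _ permutes_insert_lemma[OF insert.prems(2)] fixed'] insert.prems(1) by blast
    ultimately have "?t \<circ> (?t \<circ> \<tau>) \<in> W0 r U" using W0_comp by blast
    then show ?case by (simp add: comp_assoc[symmetric])
  qed
  then show ?thesis using \<tau> fixed by blast
qed

lemma diagonal_in_plus_part: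
  assumes open_U: "openin (top_of_set (Lambda_corner r)) U" and zero: "(\<lambda>_. 0) \<in> U"
  obtains t :: real where "t > 0" "(\<lambda>i. if i < r then t else 0) \<in> plus_part r U"
proof -
  define d where "d = (\<lambda>(t::real) (i::nat). if i < r then t else 0)"
  obtain V where V: "open V" "U = Lambda_corner r \<inter> V"
    using open_U openin_open by metis
  have "continuous_on UNIV d"
    unfolding d_def
  proof (intro continuous_on_coordinatewise_then_product)
    show "continuous_on UNIV (\<lambda>t::real. if i < r then t else 0)" for i
      by (cases "i < r") simp_all
  qed
  then have "open (d -` V)" using V(1) open_vimage by blast
  moreover have "0 \<in> d -` V" using zero V by (simp add: d_def fun_eq_iff)
  ultimately obtain e where e: "e > 0" "ball 0 e \<subseteq> d -` V"
    using open_contains_ball by blast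
  then have "e / 2 \<in> ball 0 e" by simp
  then have "d (e / 2) \<in> V" using e(2) by blast
  moreover have "d (e / 2) \<in> Lambda_corner r \<inter> chamber r" "e / 2 > 0"
    using e(1) by (simp_all add: d_def Lambda_corner_def chamber_def)
  ultimately show thesis
    using that V(2) unfolding d_def plus_part_eq by blast
qed

lemma tie_in_Gamma0:
  assumes sub: "U \<subseteq> Lambda_corner r" and open_U: "openin (top_of_set (Lambda_corner r)) U"
    and p: "p \<in> plus_part r U" and k: "Suc k < r" "p k = p (Suc k)"
  shows "k \<in> Gamma0 r U"
proof (cases "\<exists>j<r. p j \<noteq> 0")
  case True
  then show ?thesis using p k by (auto simp: Gamma0_def Wact_gamma_fixed_iff)
next
  case False
  \<comment> \<open>p = 0 cannot serve as the witness required by Gamma0; a small diagonal point can.\<close>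
  moreover have "p \<in> Lambda_corner r" using p sub by (auto simp: plus_part_def)
  ultimately have "p = (\<lambda>_. 0)"
    by (auto simp: Lambda_corner_def fun_eq_iff) (metis leI)
  then obtain t :: real where "t > 0" "(\<lambda>i. if i < r then t else 0) \<in> plus_part r U"
    using diagonal_in_plus_part[OF open_U] p by (auto simp: plus_part_def)
  then show ?thesis
    using k unfolding Gamma0_def by (intro CollectI conjI bexI[of _ "\<lambda>i. if i < r then t else 0"])
      (auto simp: Wact_gamma_fixed_iff)
qed

lemma W0_image_subset_component:
  assumes W_inv: "\<And>\<sigma> x. \<sigma> \<in> WK r \<Longrightarrow> x \<in> U \<Longrightarrow> Wact \<sigma> x \<in> U"
    and conn: "connected (plus_part r U)" and x0: "x0 \<in> plus_part r U"
  shows "w \<in> W0 r U \<Longrightarrow> Wact w ` plus_part r U \<subseteq> connected_component_set U x0"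
proof (induction w rule: W0.induct)
  case W0_id
  have "plus_part r U \<subseteq> connected_component_set U x0"
    using x0 conn by (intro connected_component_maximal) (auto simp: plus_part_def)
  then show ?case by (simp add: Wact_def)
next
  case (W0_step \<sigma> k)
  let ?S = "Wact (\<sigma> \<circ> gamma k) ` plus_part r U"
  obtain x where x: "x \<in> plus_part r U" "Wact (gamma k) x = x"
    using W0_step.hyps(2) unfolding Gamma0_def by blast
  have "Wact (\<sigma> \<circ> gamma k) x = Wact \<sigma> x"
    using W0_permutes[OF W0_step.hyps(1)] gamma_permutes[of k r] W0_step.hyps(2) x(2)
    by (simp add: Gamma0_def Wact_comp permutes_bij)
  then have "Wact \<sigma> x \<in> ?S" using x(1) by (metis image_eqI)
  moreover have "connected ?S"
    by (rule connected_continuous_image[OF continuous_on_Wact conn])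
  moreover have "\<sigma> \<circ> gamma k \<in> WK r"
    using W0_permutes[OF W0.W0_step[OF W0_step.hyps]] by (simp add: WK_def)
  then have "?S \<subseteq> U" using W_inv by (auto simp: plus_part_def)
  ultimately have "?S \<subseteq> connected_component_set U (Wact \<sigma> x)"
    by (rule connected_component_maximal)
  also have "\<dots> = connected_component_set U x0"
    using W0_step.IH x(1) by (intro connected_component_eq) blast
  finally show ?case .
qed

lemma chamber_representative_in_W0:
  assumes sub: "U \<subseteq> Lambda_corner r" and open_U: "openin (top_of_set (Lambda_corner r)) U"
    and W_inv: "\<And>\<sigma> x. \<sigma> \<in> WK r \<Longrightarrow> x \<in> U \<Longrightarrow> Wact \<sigma> x \<in> U"
    and y: "y \<in> U" and w1: "w1 \<in> W0 r U" "y \<circ> w1 \<in> chamber r"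
    and w2: "w2 permutes {..<r}" "y \<circ> w2 \<in> chamber r"
  shows "w2 \<in> W0 r U"
proof -
  have w1_perm: "w1 permutes {..<r}" using W0_permutes[OF w1(1)] .
  let ?p = "y \<circ> w1" and ?\<tau> = "inv w1 \<circ> w2"
  have "?p \<in> plus_part r U"
    using W_inv[of "inv w1" y] y w1(2) w1_perm
    by (simp add: WK_def Wact_inv permutes_inv plus_part_eq)
  then have ties: "k \<in> Gamma0 r U" if "Suc k < r" "?p k = ?p (Suc k)" for k
    using tie_in_Gamma0[OF sub open_U] that by blast
  have "?p \<circ> ?\<tau> = y \<circ> w2"
    by (simp add: fun_eq_iff permutes_inverses(1)[OF w1_perm])
  also have "\<dots> = ?p"
    using chamber_representative_unique[OF w1_perm w2(1) w1(2) w2(2)] by simp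
  finally have "?\<tau> \<in> W0 r U"
    using stabilizer_in_W0[OF w1(2) ties] permutes_compose[OF w2(1) permutes_inv[OF w1_perm]]
    by blast
  moreover have "w2 = w1 \<circ> ?\<tau>"
    by (simp add: fun_eq_iff permutes_inverses(1)[OF w1_perm])
  ultimately show ?thesis using W0_comp[OF _ w1(1)] by metis
qed

lemma component_subset_W0_chambers:
  assumes sub: "U \<subseteq> Lambda_corner r" and open_U: "openin (top_of_set (Lambda_corner r)) U"
    and W_inv: "\<And>\<sigma> x. \<sigma> \<in> WK r \<Longrightarrow> x \<in> U \<Longrightarrow> Wact \<sigma> x \<in> U"
    and x0: "x0 \<in> plus_part r U"
  shows "connected_component_set U x0 \<subseteq> (\<Union>w\<in>W0 r U. {y. y \<circ> w \<in> chamber r})"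
    (is "?K \<subseteq> ?A")
proof -
  define B where "B = (\<Union>w\<in>{w. w permutes {..<r}} - W0 r U. {y. y \<circ> w \<in> chamber r})"
  have finite_perms: "finite {w. w permutes {..<r}}" by (simp add: finite_permutations)
  moreover have "W0 r U \<subseteq> {w. w permutes {..<r}}" using W0_permutes by blast
  ultimately have "finite (W0 r U)" by (rule finite_subset[rotated])
  then have "closed ?A" "closed B"
    unfolding B_def using finite_perms closed_chamber_preimage
    by (intro closed_UN; simp)+
  moreover have "?K \<subseteq> ?A \<union> B"
  proof
    fix y assume "y \<in> ?K"
    then have "y \<in> Lambda_corner r" using connected_component_subset sub by blast
    then obtain w where "w permutes {..<r}" "y \<circ> w \<in> chamber r"
      by (rule chamber_representative_exists)
    then show "y \<in> ?A \<union> B" unfolding B_def by blast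
  qed
  moreover have "?A \<inter> B \<inter> ?K = {}"
  proof (rule ccontr)
    assume "?A \<inter> B \<inter> ?K \<noteq> {}"
    then obtain y w1 w2 where y: "y \<in> ?K" and w1: "w1 \<in> W0 r U" "y \<circ> w1 \<in> chamber r"
      and w2: "w2 permutes {..<r}" "w2 \<notin> W0 r U" "y \<circ> w2 \<in> chamber r"
      unfolding B_def by blast
    have "y \<in> U" using y connected_component_subset by blast
    then show False
      using chamber_representative_in_W0[OF sub open_U W_inv _ w1 w2(1,3)] w2(2) by blast
  qed
  moreover have "x0 \<in> ?A"
    using x0 by (intro UN_I[of id]) (simp_all add: W0.W0_id plus_part_eq)
  moreover have "x0 \<in> ?K"
    using x0 by (simp add: plus_part_def connected_component_refl)
  moreover have "\<not> (closed ?A \<and> closed B \<and> ?K \<subseteq> ?A \<union> B \<and> ?A \<inter> B \<inter> ?K = {} \<and>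
      ?A \<inter> ?K \<noteq> {} \<and> B \<inter> ?K \<noteq> {})"
    using connected_connected_component[of U x0] unfolding connected_closed by (intro notI) blast
  ultimately have "B \<inter> ?K = {}" by blast
  with \<open>?K \<subseteq> ?A \<union> B\<close> show ?thesis by blast
qed

lemma component_subset_W0_image:
  assumes sub: "U \<subseteq> Lambda_corner r" and open_U: "openin (top_of_set (Lambda_corner r)) U"
    and W_inv: "\<And>\<sigma> x. \<sigma> \<in> WK r \<Longrightarrow> x \<in> U \<Longrightarrow> Wact \<sigma> x \<in> U"
    and x0: "x0 \<in> plus_part r U"
  shows "connected_component_set U x0 \<subseteq> {Wact w x | w x. w \<in> W0 r U \<and> x \<in> plus_part r U}"
proof
  fix y assume y: "y \<in> connected_component_set U x0"
  then obtain w where w: "w \<in> W0 r U" "y \<circ> w \<in> chamber r"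
    using component_subset_W0_chambers[OF sub open_U W_inv x0] by blast
  have w_perm: "w permutes {..<r}" using W0_permutes[OF w(1)] .
  have "y \<in> U" using y connected_component_subset by blast
  then have "y \<circ> w \<in> plus_part r U"
    using W_inv[of "inv w" y] w(2) w_perm
    by (simp add: WK_def Wact_inv permutes_inv plus_part_eq)
  moreover have "y = Wact w (y \<circ> w)" by (simp add: Wact_comp_cancel[OF w_perm])
  ultimately show "y \<in> {Wact w x | w x. w \<in> W0 r U \<and> x \<in> plus_part r U}"
    using w(1) by blast
qed

theorem lemma4p9:
  fixes r :: nat and U :: "(nat \<Rightarrow> real) set"
  assumes sub: "U \<subseteq> Lambda_corner r"
    and open_U: "openin (top_of_set (Lambda_corner r)) U"
    and W_inv: "\<And>\<sigma> x. \<sigma> \<in> WK r \<Longrightarrow> x \<in> U \<Longrightarrow> Wact \<sigma> x \<in> U"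
    and conn: "connected (plus_part r U)"
    and x0: "x0 \<in> plus_part r U"
  shows "{Wact w x | w x. w \<in> W0 r U \<and> x \<in> plus_part r U} = connected_component_set U x0"
proof
  show "{Wact w x | w x. w \<in> W0 r U \<and> x \<in> plus_part r U} \<subseteq> connected_component_set U x0"
    using W0_image_subset_component[OF W_inv conn x0] by blast
  show "connected_component_set U x0 \<subseteq> {Wact w x | w x. w \<in> W0 r U \<and> x \<in> plus_part r U}"
    by (rule component_subset_W0_image[OF sub open_U W_inv x0])
qed

end
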